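(* Let $k$ be a field, $n\ge2$, $d\ge2$, and $\mathbf{m}\in\mathbb{N}^n$ with $|\mathbf{m}|=d$. The ring $\mathcal{P}_{2,2,(1,1)}$ is normal. For all other $(n,d,\mathbf{m})$, the normalization (integral closure in its fraction field) of $\mathcal{P}_{n,d,\mathbf{m}}$ is $V_{n,d}$ if $\max(\mathbf{m})<d$, and is $\mathcal{P}_{n,d,\mathbf{m}}$ itself (i.e. $\mathcal{P}_{n,d,\mathbf{m}}$ is normal) if $\max(\mathbf{m})=d$.
   Context: Let $k$ be a field and $S=k[x_1,\dots,x_n]$. For $\mathbf{a}\in\mathbb{N}^n$ write $|\mathbf{a}|=\sum_i a_i$, $\max(\mathbf{a})=\max_i a_i$, and $x^{\mathbf{a}}=x_1^{a_1}\cdots x_n^{a_n}$. Let $T_{n,d}=\{\mathbf{a}\in\mathbb{N}^n : |\mathbf{a}|=d\}$, $\mathcal{A}_{n,d}$ the semigroup generated by $T_{n,d}$, and for a semigroup $A\subseteq\mathbb{N}^n$, $k[A]$ the $k$-span of $\{x^{\mathbf{a}}:\mathbf{a}\in A\}$. $V_{n,d}=k[\mathcal{A}_{n,d}]$. For $\mathbf{m}\in T_{n,d}$, $\mathcal{A}_{n,d,\mathbf{m}}$ is the semigroup generated by $T_{n,d}\setminus\{\mathbf{m}\}$ and $\mathcal{P}_{n,d,\mathbf{m}}=k[\mathcal{A}_{n,d,\mathbf{m}}]$ (the pinched Veronese ring). *)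

theory Defs
  imports "HOL-Library.Poly_Mapping" "HOL-Computational_Algebra.Fraction_Field"
begin

(* Exponent vectors a in N^n are finitely supported maps nat \<Rightarrow>\<^sub>0 nat with support in {..<n}.
   The polynomial ring S = k[x_0,...,x_{n-1}] sits inside (nat \<Rightarrow>\<^sub>0 nat) \<Rightarrow>\<^sub>0 'k
   (coefficient maps, convolution product); the monomial x^a is Poly_Mapping.single a 1. *)

definition total_deg :: "nat \<Rightarrow> (nat \<Rightarrow>\<^sub>0 nat) \<Rightarrow> nat" where
  "total_deg n a = (\<Sum>i<n. Poly_Mapping.lookup a i)"

definition max_exp :: "nat \<Rightarrow> (nat \<Rightarrow>\<^sub>0 nat) \<Rightarrow> nat" where
  "max_exp n a = Max (Poly_Mapping.lookup a ` {..<n})"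

definition T_exps :: "nat \<Rightarrow> nat \<Rightarrow> (nat \<Rightarrow>\<^sub>0 nat) set" where
  "T_exps n d = {a. Poly_Mapping.keys a \<subseteq> {..<n} \<and> total_deg n a = d}"

inductive_set semigroup_gen :: "(nat \<Rightarrow>\<^sub>0 nat) set \<Rightarrow> (nat \<Rightarrow>\<^sub>0 nat) set" for G where
  zero: "0 \<in> semigroup_gen G"
| add: "a \<in> G \<Longrightarrow> b \<in> semigroup_gen G \<Longrightarrow> a + b \<in> semigroup_gen G"

definition monomial_ring :: "(nat \<Rightarrow>\<^sub>0 nat) set \<Rightarrow> ((nat \<Rightarrow>\<^sub>0 nat) \<Rightarrow>\<^sub>0 'k::field) set" where
  "monomial_ring A = {p. Poly_Mapping.keys p \<subseteq> A}"

definition veronese :: "nat \<Rightarrow> nat \<Rightarrow> ((nat \<Rightarrow>\<^sub>0 nat) \<Rightarrow>\<^sub>0 'k::field) set" where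
  "veronese n d = monomial_ring (semigroup_gen (T_exps n d))"

definition pinched_veronese :: "nat \<Rightarrow> nat \<Rightarrow> (nat \<Rightarrow>\<^sub>0 nat) \<Rightarrow> ((nat \<Rightarrow>\<^sub>0 nat) \<Rightarrow>\<^sub>0 'k::field) set" where
  "pinched_veronese n d m = monomial_ring (semigroup_gen (T_exps n d - {m}))"

(* fraction field of a subdomain R of S, realised inside Frac(S) *)
definition frac_field :: "'a::idom set \<Rightarrow> 'a fract set" where
  "frac_field R = {Fract a b | a b. a \<in> R \<and> b \<in> R \<and> b \<noteq> 0}"

definition integral_over :: "'a::idom set \<Rightarrow> 'a fract \<Rightarrow> bool" where
  "integral_over R z \<longleftrightarrow> (\<exists>N c. (\<forall>i<N. c i \<in> R) \<and> z ^ N + (\<Sum>i<N. Fract (c i) 1 * z ^ i) = 0)"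

definition normalization :: "'a::idom set \<Rightarrow> 'a fract set" where
  "normalization R = {z \<in> frac_field R. integral_over R z}"

definition embed :: "'a::idom set \<Rightarrow> 'a fract set" where
  "embed R = (\<lambda>a. Fract a 1) ` R"

definition is_normal :: "'a::idom set \<Rightarrow> bool" where
  "is_normal R \<longleftrightarrow> normalization R = embed R"

end

theory Submission
  imports Defs "HOL-Computational_Algebra.Polynomial_Factorial"
begin

(* The polynomial ring S = k[x_1, ..., x_n] is integrally closed, so an element z of the
   normalization of a monomial subring k[M] is a polynomial h with h g = f for some f, g in k[M].
   If M is cut out by an additive, saturated condition Q (Q b and Q (a + b) imply Q a) together
   with an additive weight w <= 0, then comparing supports in h g = f gives Q on the exponents
   of h, and the part of h of top weight, raised to the degree of an integral equation, shows
   that w <= 0 on the exponents of h.  For m = x_i^d the exponents of the pinched Veronese ring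
   are those of degree divisible by d with d a_i <= (d - 1) |a|, and for n = d = 2, m = x_1 x_2
   they are the even ones; both sets have this shape, so these rings are normal.  Otherwise every
   monomial of V is in P or in x^m P, and x^(2m), x_k^d, x^m x_k^d lie in P for a suitable k, so
   every v = p + x^m q in V lies in Frac P and is a root of (X - p)^2 - x^(2m) q^2. *)

type_synonym 'k mpoly = "(nat \<Rightarrow>\<^sub>0 nat) \<Rightarrow>\<^sub>0 'k"

section \<open>Integral closedness of the polynomial ring\<close>

(* A field is Euclidean with trivial normalization; this makes polynomials over a fraction
   field a factorial ring. *)
instantiation fract ::
  (idom) "{unique_euclidean_ring, normalization_euclidean_semiring, normalization_semidom_multiplicative}"
begin
definition [simp]: "normalize_fract (x::'a fract) = (if x = 0 then 0 else (1::'a fract))"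
definition [simp]: "unit_factor_fract (x::'a fract) = x"
definition [simp]: "modulo_fract (x::'a fract) (y::'a fract) = (if y = 0 then x else 0)"
definition [simp]: "euclidean_size_fract (x::'a fract) = (if x = 0 then 0 else (1::nat))"
definition [simp]: "division_segment (x :: 'a fract) = 1"
instance
  by standard (simp_all add: dvd_field_iff field_split_simps split: if_splits)
end

instantiation fract :: (idom) euclidean_ring_gcd
begin
definition gcd_fract :: "'a fract \<Rightarrow> 'a fract \<Rightarrow> 'a fract" where
  "gcd_fract = Euclidean_Algorithm.gcd"
definition lcm_fract :: "'a fract \<Rightarrow> 'a fract \<Rightarrow> 'a fract" where
  "lcm_fract = Euclidean_Algorithm.lcm"
definition Gcd_fract :: "'a fract set \<Rightarrow> 'a fract" where
  "Gcd_fract = Euclidean_Algorithm.Gcd"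
definition Lcm_fract :: "'a fract set \<Rightarrow> 'a fract" where
  "Lcm_fract = Euclidean_Algorithm.Lcm"
instance by standard (simp_all add: gcd_fract_def lcm_fract_def Gcd_fract_def Lcm_fract_def)
end

instance fract :: (idom) field_gcd ..

lemma homogeneous_relation_scale:
  fixes c :: "nat \<Rightarrow> 'a::comm_ring_1"
  shows "h ^ N * (a ^ N + (\<Sum>i<N. c i * a ^ i * b ^ (N - i)))
    = (a * h) ^ N + (\<Sum>i<N. c i * (a * h) ^ i * (b * h) ^ (N - i))"
proof -
  have "h ^ N * (c i * a ^ i * b ^ (N - i)) = c i * (a * h) ^ i * (b * h) ^ (N - i)" if "i < N" for i
  proof -
    have "h ^ N = h ^ i * h ^ (N - i)" using that by (simp flip: power_add)
    then show ?thesis by (simp add: power_mult_distrib algebra_simps)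
  qed
  then show ?thesis
    by (simp add: distrib_left sum_distrib_left power_mult_distrib)
qed

lemma dvd_of_homogeneous_monic_relation:
  fixes f g :: "'a::factorial_ring_gcd"
  assumes "g \<noteq> 0" and rel: "f ^ N + (\<Sum>i<N. c i * f ^ i * g ^ (N - i)) = 0"
  shows "g dvd f"
proof -
  obtain a b where ab: "f = a * gcd f g" "g = b * gcd f g" "coprime a b"
    using gcd_coprime_exists[of f g] \<open>g \<noteq> 0\<close> by auto
  have "gcd f g ^ N * (a ^ N + (\<Sum>i<N. c i * a ^ i * b ^ (N - i))) = 0"
    using rel ab by (simp only: homogeneous_relation_scale)
  then have rel': "a ^ N + (\<Sum>i<N. c i * a ^ i * b ^ (N - i)) = 0"
    using \<open>g \<noteq> 0\<close> by simp
  have "b dvd (\<Sum>i<N. c i * a ^ i * b ^ (N - i))"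
    by (rule dvd_sum) (simp add: le_imp_power_dvd)
  then have "b dvd a ^ N"
    using rel' by (metis add.commute add_eq_0_iff dvd_minus_iff)
  moreover have "coprime b (a ^ N)"
    using ab(3) by (simp add: coprime_commute)
  ultimately have "is_unit b"
    by (meson coprime_absorb_left)
  then show ?thesis
    by (subst ab(2)) (simp add: mult_unit_dvd_iff')
qed

lemma update_zero_add:
  "Poly_Mapping.update j 0 (a + b) = Poly_Mapping.update j 0 a + Poly_Mapping.update j (0::nat) b"
  by (rule poly_mapping_eqI) (simp add: lookup_update lookup_add)

lemma update_zero_plus_single:
  "Poly_Mapping.update j 0 a + Poly_Mapping.single j (Poly_Mapping.lookup a j) = (a :: 'a \<Rightarrow>\<^sub>0 nat)"
  by (rule poly_mapping_eqI) (simp add: lookup_update lookup_add lookup_single)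

lemma update_zero_eq_iff:
  "(Poly_Mapping.lookup a j = i \<and> Poly_Mapping.update j 0 a = b) \<longleftrightarrow>
   (Poly_Mapping.lookup b j = 0 \<and> a = b + Poly_Mapping.single j (i :: nat))"
  using update_zero_plus_single[of j a]
  by (auto simp: lookup_update lookup_add intro!: poly_mapping_eqI)

lemma poly_mapping_sum_single:
  "(h :: 'a \<Rightarrow>\<^sub>0 'b::comm_monoid_add) = (\<Sum>a\<in>Poly_Mapping.keys h. Poly_Mapping.single a (Poly_Mapping.lookup h a))"
  by (rule poly_mapping_eqI) (simp add: lookup_sum lookup_single when_def sum.delta in_keys_iff)

lemma keys_add_nat:
  "Poly_Mapping.keys (a + b :: 'a \<Rightarrow>\<^sub>0 nat) = Poly_Mapping.keys a \<union> Poly_Mapping.keys b"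
  by (auto simp: in_keys_iff lookup_add)

lemma to_fract_power: "to_fract (x ^ k) = to_fract x ^ k"
  by (induction k) simp_all

lemma fract_poly_sum: "fract_poly (sum f A) = (\<Sum>a\<in>A. fract_poly (f a))"
  by (induction A rule: infinite_finite_induct) simp_all

lemma fract_poly_power: "fract_poly (p ^ k) = fract_poly p ^ k"
  by (induction k) simp_all

(* h as a polynomial in x_j whose coefficients do not involve x_j *)
definition var_poly :: "nat \<Rightarrow> 'k::comm_ring_1 mpoly \<Rightarrow> 'k mpoly poly" where
  "var_poly j h = (\<Sum>a\<in>Poly_Mapping.keys h.
     monom (Poly_Mapping.single (Poly_Mapping.update j 0 a) (Poly_Mapping.lookup h a)) (Poly_Mapping.lookup a j))"

definition eval_var :: "nat \<Rightarrow> 'k::comm_ring_1 mpoly poly \<Rightarrow> 'k mpoly" where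
  "eval_var j q = poly q (Poly_Mapping.single (Poly_Mapping.single j 1) 1)"

lemma lookup_coeff_var_poly:
  "Poly_Mapping.lookup (coeff (var_poly j h) i) b =
    (if Poly_Mapping.lookup b j = 0 then Poly_Mapping.lookup h (b + Poly_Mapping.single j i) else 0)"
proof -
  have "Poly_Mapping.lookup (coeff (var_poly j h) i) b =
     (\<Sum>a\<in>Poly_Mapping.keys h. if Poly_Mapping.lookup a j = i \<and> Poly_Mapping.update j 0 a = b
        then Poly_Mapping.lookup h a else 0)"
    unfolding var_poly_def coeff_sum lookup_sum
    by (rule sum.cong) (auto simp: coeff_monom lookup_single when_def)
  also have "\<dots> = (\<Sum>a\<in>Poly_Mapping.keys h. if Poly_Mapping.lookup b j = 0 \<and> a = b + Poly_Mapping.single j i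
        then Poly_Mapping.lookup h a else 0)"
    by (simp only: update_zero_eq_iff)
  also have "\<dots> = (if Poly_Mapping.lookup b j = 0 then Poly_Mapping.lookup h (b + Poly_Mapping.single j i) else 0)"
    by (auto simp: sum.delta' in_keys_iff)
  finally show ?thesis .
qed

lemma var_poly_add: "var_poly j (x + y) = var_poly j x + var_poly j y"
  by (rule poly_eqI, rule poly_mapping_eqI) (simp add: lookup_coeff_var_poly lookup_add)

lemma var_poly_0 [simp]: "var_poly j 0 = 0"
  by (simp add: var_poly_def)

lemma var_poly_sum: "var_poly j (sum f A) = (\<Sum>a\<in>A. var_poly j (f a))"
  by (induction A rule: infinite_finite_induct) (auto simp: var_poly_add)

lemma var_poly_single:
  "var_poly j (Poly_Mapping.single a c) =
    monom (Poly_Mapping.single (Poly_Mapping.update j 0 a) c) (Poly_Mapping.lookup a j)"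
  by (cases "c = 0") (simp_all add: var_poly_def)

lemma var_poly_mult: "var_poly j (x * y) = var_poly j x * var_poly j y"
proof -
  have single: "var_poly j (Poly_Mapping.single a c * Poly_Mapping.single b e) =
      var_poly j (Poly_Mapping.single a c) * var_poly j (Poly_Mapping.single b e)" for a b c e
    by (simp add: mult_single var_poly_single mult_monom update_zero_add lookup_add)
  have "var_poly j (x * y) = (\<Sum>a\<in>Poly_Mapping.keys x. \<Sum>b\<in>Poly_Mapping.keys y.
      var_poly j (Poly_Mapping.single a (Poly_Mapping.lookup x a) * Poly_Mapping.single b (Poly_Mapping.lookup y b)))"
    by (subst poly_mapping_sum_single[of x], subst poly_mapping_sum_single[of y])
      (simp add: sum_product var_poly_sum)
  also have "\<dots> = var_poly j x * var_poly j y"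
    by (subst (3) poly_mapping_sum_single[of x], subst (3) poly_mapping_sum_single[of y])
      (simp add: single var_poly_sum sum_product)
  finally show ?thesis .
qed

lemma var_poly_1: "var_poly j 1 = 1"
proof -
  have "Poly_Mapping.update j 0 0 = (0 :: nat \<Rightarrow>\<^sub>0 nat)"
    by (rule poly_mapping_eqI) (simp add: lookup_update)
  then show ?thesis
    using var_poly_single[of j 0 "1::'a"] by (simp add: monom_0 one_pCons)
qed

lemma var_poly_power: "var_poly j (x ^ k) = var_poly j x ^ k"
  by (induction k) (simp_all add: var_poly_1 var_poly_mult)

lemma single_var_power:
  "Poly_Mapping.single (Poly_Mapping.single j 1) (1::'k::comm_ring_1) ^ k =
   Poly_Mapping.single (Poly_Mapping.single j k) 1"
  by (induction k) (simp_all add: mult_single flip: single_add)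

lemma eval_var_var_poly: "eval_var j (var_poly j h) = h"
proof -
  have "eval_var j (var_poly j h) = (\<Sum>a\<in>Poly_Mapping.keys h.
      Poly_Mapping.single (Poly_Mapping.update j 0 a) (Poly_Mapping.lookup h a) *
      Poly_Mapping.single (Poly_Mapping.single j 1) 1 ^ Poly_Mapping.lookup a j)"
    by (simp add: eval_var_def var_poly_def poly_sum poly_monom)
  also have "\<dots> = (\<Sum>a\<in>Poly_Mapping.keys h. Poly_Mapping.single a (Poly_Mapping.lookup h a))"
    by (simp only: single_var_power mult_single update_zero_plus_single mult_1_right)
  also have "\<dots> = h"
    by (rule poly_mapping_sum_single[symmetric])
  finally show ?thesis .
qed

lemma var_poly_eq_0_iff [simp]: "var_poly j x = 0 \<longleftrightarrow> x = 0"
  by (metis var_poly_0 eval_var_var_poly)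

lemma eval_var_mult: "eval_var j (p * q) = eval_var j p * eval_var j q"
  by (simp add: eval_var_def poly_mult)

lemma eval_var_smult: "eval_var j (smult c p) = c * eval_var j p"
  by (simp add: eval_var_def)

definition vars :: "'k::zero mpoly \<Rightarrow> nat set" where
  "vars h = (\<Union>a\<in>Poly_Mapping.keys h. Poly_Mapping.keys a)"

lemma finite_vars: "finite (vars h)"
  by (simp add: vars_def)

lemma vars_mult: "vars (x * y) \<subseteq> vars x \<union> vars y"
  using keys_mult[of x y] by (fastforce simp: vars_def keys_add_nat)

lemma vars_power: "vars (x ^ k) \<subseteq> vars x"
proof (induction k)
  case (Suc k)
  then show ?case using vars_mult[of x "x ^ k"] by auto
qed (simp add: vars_def)

lemma vars_coeff_var_poly: "vars (coeff (var_poly j h) i) \<subseteq> vars h - {j}"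
proof
  fix v assume "v \<in> vars (coeff (var_poly j h) i)"
  then obtain b where b: "b \<in> Poly_Mapping.keys (coeff (var_poly j h) i)" "v \<in> Poly_Mapping.keys b"
    by (auto simp: vars_def)
  then have "Poly_Mapping.lookup b j = 0" "b + Poly_Mapping.single j i \<in> Poly_Mapping.keys h"
    by (auto simp: in_keys_iff lookup_coeff_var_poly split: if_splits)
  moreover have "v \<in> Poly_Mapping.keys (b + Poly_Mapping.single j i)"
    using b(2) by (simp add: keys_add_nat)
  ultimately show "v \<in> vars h - {j}"
    using b(2) by (auto simp: vars_def in_keys_iff)
qed

lemma vars_empty_imp_const:
  assumes "vars h = {}"
  shows "h = Poly_Mapping.single 0 (Poly_Mapping.lookup h 0)"
  using assms by (intro poly_mapping_eqI) (auto simp: vars_def lookup_single when_def in_keys_iff)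

lemma integral_relation_clear_denominators:
  fixes z :: "'a::idom fract"
  assumes rel: "z ^ N + (\<Sum>i<N. to_fract (c i) * z ^ i) = 0"
    and zg: "z * to_fract g = to_fract f"
  shows "f ^ N + (\<Sum>i<N. c i * f ^ i * g ^ (N - i)) = 0"
proof -
  have "to_fract (f ^ N + (\<Sum>i<N. c i * f ^ i * g ^ (N - i)))
      = (z * to_fract g) ^ N + (\<Sum>i<N. to_fract (c i) * (z * to_fract g) ^ i * (1 * to_fract g) ^ (N - i))"
    using zg by (simp add: to_fract_power)
  also have "\<dots> = to_fract g ^ N * (z ^ N + (\<Sum>i<N. to_fract (c i) * z ^ i * 1 ^ (N - i)))"
    by (simp only: homogeneous_relation_scale)
  also have "\<dots> = 0"
    using rel by simp
  finally show ?thesis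
    by (simp only: to_fract_eq_0_iff)
qed

lemma pseudo_divmod_exact_if_fract_poly_dvd:
  fixes p q :: "'a::idom poly"
  assumes "p \<noteq> 0" and dvd: "fract_poly p dvd fract_poly q"
  shows "\<exists>r. smult (lead_coeff p ^ (Suc (degree q) - degree p)) q = p * r"
proof -
  obtain r s where rs: "pseudo_divmod q p = (r, s)"
    by fastforce
  let ?l = "lead_coeff p ^ (Suc (degree q) - degree p)"
  have eq: "smult ?l q = p * r + s"
    using pseudo_divmod(1)[OF \<open>p \<noteq> 0\<close> rs] by simp
  have "s = 0"
  proof (rule ccontr)
    assume "s \<noteq> 0"
    then have "degree s < degree p"
      using pseudo_divmod(2)[OF \<open>p \<noteq> 0\<close> rs] by simp
    have "fract_poly s = smult (to_fract ?l) (fract_poly q) - fract_poly p * fract_poly r"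
      using arg_cong[OF eq, of fract_poly] by simp
    moreover have "fract_poly p dvd smult (to_fract ?l) (fract_poly q) - fract_poly p * fract_poly r"
      using dvd by (simp add: dvd_diff dvd_smult)
    ultimately have "fract_poly p dvd fract_poly s"
      by simp
    then have "degree (fract_poly p) \<le> degree (fract_poly s)"
      using \<open>s \<noteq> 0\<close> by (intro dvd_imp_degree_le) simp_all
    with \<open>degree s < degree p\<close> show False
      by (simp add: degree_map_poly)
  qed
  with eq show ?thesis
    by auto
qed

lemma integral_over_const_denominator:
  fixes z :: "'k::field mpoly fract"
  assumes "vars g = {}" and "g \<noteq> 0" and zg: "z * to_fract g = to_fract f"
  shows "\<exists>h. z = to_fract h"
proof -
  define c where "c = Poly_Mapping.lookup g 0"
  have g: "g = Poly_Mapping.single 0 c"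
    using vars_empty_imp_const[OF \<open>vars g = {}\<close>] c_def by simp
  with \<open>g \<noteq> 0\<close> have "c \<noteq> 0"
    by auto
  with g have "to_fract g * to_fract (Poly_Mapping.single 0 (inverse c)) = 1"
    by (simp add: mult_single flip: to_fract_mult)
  then have "z = to_fract (f * Poly_Mapping.single 0 (inverse c))"
    using zg by (simp flip: zg mult.assoc)
  then show ?thesis ..
qed

(* Over the fraction field, g divides f as polynomials in x_j (rational root test); so
   pseudo-division replaces the denominator g by a power of its leading coefficient in x_j,
   which does not involve x_j. *)
lemma integral_over_reduce_denominator:
  fixes z :: "'k::field mpoly fract"
  assumes rel: "z ^ N + (\<Sum>i<N. to_fract (c i) * z ^ i) = 0"
    and "g \<noteq> 0" and zg: "z * to_fract g = to_fract f" and "j \<in> vars g"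
  shows "\<exists>l h. l \<noteq> 0 \<and> vars l \<subseteq> vars g - {j} \<and> z * to_fract l = to_fract h"
proof -
  define F where "F = var_poly j f"
  define G where "G = var_poly j g"
  have "G \<noteq> 0"
    using \<open>g \<noteq> 0\<close> by (simp add: G_def)
  have "F ^ N + (\<Sum>i<N. var_poly j (c i) * F ^ i * G ^ (N - i)) = 0"
    using arg_cong[OF integral_relation_clear_denominators[OF rel zg], of "var_poly j"]
    by (simp add: F_def G_def var_poly_add var_poly_sum var_poly_mult var_poly_power)
  then have "fract_poly (F ^ N + (\<Sum>i<N. var_poly j (c i) * F ^ i * G ^ (N - i))) = 0"
    by simp
  then have "fract_poly F ^ N +
      (\<Sum>i<N. fract_poly (var_poly j (c i)) * fract_poly F ^ i * fract_poly G ^ (N - i)) = 0"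
    by (simp add: fract_poly_power fract_poly_sum)
  then have "fract_poly G dvd fract_poly F"
    using \<open>G \<noteq> 0\<close> by (intro dvd_of_homogeneous_monic_relation) simp_all
  then obtain r where r: "smult (lead_coeff G ^ (Suc (degree F) - degree G)) F = G * r"
    using pseudo_divmod_exact_if_fract_poly_dvd[OF \<open>G \<noteq> 0\<close>] by blast
  define l where "l = lead_coeff G ^ (Suc (degree F) - degree G)"
  have "l \<noteq> 0"
    using \<open>G \<noteq> 0\<close> by (simp add: l_def)
  have "vars l \<subseteq> vars g - {j}"
    using vars_power[of "lead_coeff G"] vars_coeff_var_poly[of j g] unfolding l_def G_def by blast
  have "l * f = g * eval_var j r"
    using arg_cong[OF r, of "eval_var j"]
    by (simp add: l_def eval_var_smult eval_var_mult F_def G_def eval_var_var_poly)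
  have "to_fract g * (z * to_fract l) = (z * to_fract g) * to_fract l"
    by (simp only: ac_simps)
  also have "\<dots> = to_fract (g * eval_var j r)"
    using zg \<open>l * f = g * eval_var j r\<close> by (simp only: mult.commute flip: to_fract_mult)
  finally have "to_fract g * (z * to_fract l) = to_fract g * to_fract (eval_var j r)"
    by simp
  then have "z * to_fract l = to_fract (eval_var j r)"
    using \<open>g \<noteq> 0\<close> by simp
  with \<open>l \<noteq> 0\<close> \<open>vars l \<subseteq> vars g - {j}\<close> show ?thesis
    by blast
qed

theorem mpoly_integrally_closed:
  fixes z :: "'k::field mpoly fract"
  assumes rel: "z ^ N + (\<Sum>i<N. to_fract (c i) * z ^ i) = 0"
    and "g \<noteq> 0" and "z * to_fract g = to_fract f"
  shows "\<exists>h. z = to_fract h"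
  using assms(2,3)
proof (induction "card (vars g)" arbitrary: f g rule: less_induct)
  case less
  show ?case
  proof (cases "vars g = {}")
    case True
    then show ?thesis
      using less.prems integral_over_const_denominator by blast
  next
    case False
    then obtain j where "j \<in> vars g"
      by blast
    then obtain l h where "l \<noteq> 0" "vars l \<subseteq> vars g - {j}" "z * to_fract l = to_fract h"
      using integral_over_reduce_denominator[OF rel less.prems] by blast
    moreover have "card (vars l) < card (vars g)"
      using \<open>vars l \<subseteq> vars g - {j}\<close> \<open>j \<in> vars g\<close> finite_vars[of g]
      by (meson card_mono card_Diff1_less finite_Diff le_less_trans)
    ultimately show ?thesis
      using less.hyps by blast
  qed
qed

section \<open>Saturated supports and weights\<close>

definition restrict_keys :: "('a \<Rightarrow> bool) \<Rightarrow> ('a \<Rightarrow>\<^sub>0 'b::zero) \<Rightarrow> 'a \<Rightarrow>\<^sub>0 'b" where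
  "restrict_keys Q h = Poly_Mapping.mapp (\<lambda>a c. if Q a then c else 0) h"

lemma lookup_restrict_keys:
  "Poly_Mapping.lookup (restrict_keys Q h) a = (if Q a then Poly_Mapping.lookup h a else 0)"
  by (auto simp: restrict_keys_def lookup_mapp when_def in_keys_iff)

lemma keys_restrict_keys: "Poly_Mapping.keys (restrict_keys Q h) = {a \<in> Poly_Mapping.keys h. Q a}"
  by (auto simp: in_keys_iff lookup_restrict_keys split: if_splits)

lemma restrict_keys_split: "h = restrict_keys Q h + restrict_keys (\<lambda>a. \<not> Q a) h"
  by (rule poly_mapping_eqI) (simp add: lookup_restrict_keys lookup_add)

lemma keys_factor_in_saturated:
  fixes h g f :: "'a::{ordered_cancel_comm_monoid_add,linorder} \<Rightarrow>\<^sub>0 'b::idom"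
  assumes Q_add: "\<And>a b. Q a \<Longrightarrow> Q b \<Longrightarrow> Q (a + b)"
    and Q_saturated: "\<And>a b. Q b \<Longrightarrow> Q (a + b) \<Longrightarrow> Q a"
    and "h * g = f" and "g \<noteq> 0"
    and "\<forall>a\<in>Poly_Mapping.keys g. Q a" and "\<forall>a\<in>Poly_Mapping.keys f. Q a"
  shows "\<forall>a\<in>Poly_Mapping.keys h. Q a"
proof -
  define h0 where "h0 = restrict_keys Q h"
  define h1 where "h1 = restrict_keys (\<lambda>a. \<not> Q a) h"
  have f: "f = h0 * g + h1 * g"
    using \<open>h * g = f\<close> restrict_keys_split[of h Q] by (metis h0_def h1_def distrib_right)
  have Q0: "Q e" if "e \<in> Poly_Mapping.keys (h0 * g)" for e
    using keys_mult[of h0 g] that assms(5) Q_add by (auto simp: h0_def keys_restrict_keys)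
  have Q1: "\<not> Q e" if e: "e \<in> Poly_Mapping.keys (h1 * g)" for e
  proof -
    obtain a b where "e = a + b" "a \<in> Poly_Mapping.keys h1" "b \<in> Poly_Mapping.keys g"
      using keys_mult[of h1 g] e by blast
    then show ?thesis
      using assms(5) Q_saturated[of b a] by (auto simp: h1_def keys_restrict_keys)
  qed
  have "Poly_Mapping.keys (h1 * g) = {}"
  proof (rule equals0I)
    fix e assume e: "e \<in> Poly_Mapping.keys (h1 * g)"
    then have "\<not> Q e"
      by (rule Q1)
    then have "Poly_Mapping.lookup f e = 0" "Poly_Mapping.lookup (h0 * g) e = 0"
      using Q0 assms(6) by (auto simp: in_keys_iff)
    then show False
      using e f by (simp add: lookup_add in_keys_iff)
  qed
  then have "h1 = 0"
    using \<open>g \<noteq> 0\<close> by simp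
  then show ?thesis
    using restrict_keys_split[of h Q] by (metis add_0_right h0_def h1_def keys_restrict_keys mem_Collect_eq)
qed

definition weight_le :: "('a \<Rightarrow> int) \<Rightarrow> int \<Rightarrow> ('a \<Rightarrow>\<^sub>0 'b::zero) \<Rightarrow> bool" where
  "weight_le w K p \<longleftrightarrow> (\<forall>a\<in>Poly_Mapping.keys p. w a \<le> K)"

definition weight_less :: "('a \<Rightarrow> int) \<Rightarrow> int \<Rightarrow> ('a \<Rightarrow>\<^sub>0 'b::zero) \<Rightarrow> bool" where
  "weight_less w K p \<longleftrightarrow> (\<forall>a\<in>Poly_Mapping.keys p. w a < K)"

definition weight_eq :: "('a \<Rightarrow> int) \<Rightarrow> int \<Rightarrow> ('a \<Rightarrow>\<^sub>0 'b::zero) \<Rightarrow> bool" where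
  "weight_eq w K p \<longleftrightarrow> (\<forall>a\<in>Poly_Mapping.keys p. w a = K)"

lemma weight_less_add: "weight_less w K x \<Longrightarrow> weight_less w K y \<Longrightarrow> weight_less w K (x + y)"
  using keys_add[of x y] by (auto simp: weight_less_def)

lemma weight_less_sum: "(\<And>i. i \<in> A \<Longrightarrow> weight_less w K (f i)) \<Longrightarrow> weight_less w K (sum f A)"
  by (induction A rule: infinite_finite_induct) (auto simp: weight_less_add, auto simp: weight_less_def)

lemma weight_le_less_trans: "weight_le w K x \<Longrightarrow> K < K' \<Longrightarrow> weight_less w K' x"
  by (auto simp: weight_le_def weight_less_def)

lemma weight_eq_imp_le: "weight_eq w K x \<Longrightarrow> weight_le w K x"
  by (auto simp: weight_le_def weight_eq_def)

context
  fixes w :: "'a::{ordered_cancel_comm_monoid_add,linorder} \<Rightarrow> int"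
  assumes w_add: "\<And>a b. w (a + b) = w a + w b"
begin

lemma weight_le_mult:
  "weight_le w K (x :: 'a \<Rightarrow>\<^sub>0 'b::idom) \<Longrightarrow> weight_le w L y \<Longrightarrow> weight_le w (K + L) (x * y)"
  using keys_mult[of x y] by (fastforce simp: weight_le_def w_add add_mono)

lemma weight_less_le_mult:
  "weight_less w K (x :: 'a \<Rightarrow>\<^sub>0 'b::idom) \<Longrightarrow> weight_le w L y \<Longrightarrow> weight_less w (K + L) (x * y)"
  using keys_mult[of x y] by (fastforce simp: weight_le_def weight_less_def w_add add_less_le_mono)

lemma weight_le_less_mult:
  "weight_le w K (x :: 'a \<Rightarrow>\<^sub>0 'b::idom) \<Longrightarrow> weight_less w L y \<Longrightarrow> weight_less w (K + L) (x * y)"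
  using keys_mult[of x y] by (fastforce simp: weight_le_def weight_less_def w_add add_le_less_mono)

lemma weight_eq_mult:
  "weight_eq w K (x :: 'a \<Rightarrow>\<^sub>0 'b::idom) \<Longrightarrow> weight_eq w L y \<Longrightarrow> weight_eq w (K + L) (x * y)"
  using keys_mult[of x y] by (fastforce simp: weight_eq_def w_add)

lemma weight_zero: "w 0 = 0"
  using w_add[of 0 0] by simp

lemma weight_eq_power: "weight_eq w K (x :: 'a \<Rightarrow>\<^sub>0 'b::idom) \<Longrightarrow> weight_eq w (int k * K) (x ^ k)"
proof (induction k)
  case (Suc k)
  then show ?case
    using weight_eq_mult[of K x "int k * K" "x ^ k"] by (simp add: algebra_simps)
qed (simp add: weight_eq_def weight_zero)

lemma weight_le_power: "weight_le w K (x :: 'a \<Rightarrow>\<^sub>0 'b::idom) \<Longrightarrow> weight_le w (int k * K) (x ^ k)"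
proof (induction k)
  case (Suc k)
  then show ?case
    using weight_le_mult[of K x "int k * K" "x ^ k"] by (simp add: algebra_simps)
qed (simp add: weight_le_def weight_zero)

lemma power_top_weight_part:
  fixes H r :: "'a \<Rightarrow>\<^sub>0 'b::idom"
  assumes "weight_eq w t H" and "weight_less w t r" and "t \<ge> 0"
  shows "\<exists>R. (H + r) ^ k = H ^ k + R \<and> weight_less w (int k * t) R"
proof (induction k)
  case 0
  then show ?case
    by (intro exI[of _ 0]) (simp add: weight_less_def)
next
  case (Suc k)
  then obtain R where R: "(H + r) ^ k = H ^ k + R" "weight_less w (int k * t) R"
    by blast
  have "(H + r) ^ Suc k = H ^ Suc k + (H ^ k * r + R * H + R * r)"
    using R(1) by (simp add: algebra_simps)
  moreover have "weight_less w (int k * t + t) (H ^ k * r + R * H + R * r)"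
  proof (intro weight_less_add)
    show "weight_less w (int k * t + t) (H ^ k * r)"
      using weight_le_less_mult[OF weight_eq_imp_le[OF weight_eq_power[OF assms(1)]] assms(2)] .
    show "weight_less w (int k * t + t) (R * H)"
      using weight_less_le_mult[OF R(2) weight_eq_imp_le[OF assms(1)]] .
    have "weight_le w t r"
      using assms(2) by (auto simp: weight_le_def weight_less_def)
    then show "weight_less w (int k * t + t) (R * r)"
      using weight_less_le_mult[OF R(2)] by blast
  qed
  ultimately show ?case
    by (auto simp: algebra_simps)
qed

lemma integral_weight_nonpos:
  fixes h :: "'a \<Rightarrow>\<^sub>0 'b::idom"
  assumes c: "\<And>i. i < N \<Longrightarrow> weight_le w 0 (c i)"
    and rel: "h ^ N + (\<Sum>i<N. c i * h ^ i) = 0"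
  shows "weight_le w 0 h"
proof (rule ccontr)
  assume "\<not> weight_le w 0 h"
  then obtain a0 where a0: "a0 \<in> Poly_Mapping.keys h" "w a0 > 0"
    by (auto simp: weight_le_def)
  define t where "t = Max (w ` Poly_Mapping.keys h)"
  have t_max: "w a \<le> t" if "a \<in> Poly_Mapping.keys h" for a
    using that by (simp add: t_def)
  have "t > 0"
    using t_max[OF a0(1)] a0(2) by simp
  have "t \<in> w ` Poly_Mapping.keys h"
    unfolding t_def using a0(1) by (intro Max_in) auto
  then obtain a1 where a1: "a1 \<in> Poly_Mapping.keys h" "w a1 = t"
    by auto
  define H where "H = restrict_keys (\<lambda>a. w a = t) h"
  have h: "h = H + restrict_keys (\<lambda>a. w a \<noteq> t) h"
    unfolding H_def by (rule restrict_keys_split)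
  have H: "weight_eq w t H"
    by (simp add: weight_eq_def H_def keys_restrict_keys)
  have "weight_less w t (restrict_keys (\<lambda>a. w a \<noteq> t) h)"
    using t_max by (fastforce simp: weight_less_def keys_restrict_keys)
  then obtain R where R: "h ^ N = H ^ N + R" "weight_less w (int N * t) R"
    using power_top_weight_part[OF H _ order.strict_implies_order[OF \<open>t > 0\<close>], of _ N] h by metis
  have "a1 \<in> Poly_Mapping.keys H"
    using a1 by (simp add: H_def keys_restrict_keys)
  then have "H \<noteq> 0"
    by auto
  then obtain e where e: "e \<in> Poly_Mapping.keys (H ^ N)"
    by (metis keys_eq_empty equals0I power_not_zero)
  have we: "w e = int N * t"
    using weight_eq_power[OF H, of N] e by (simp add: weight_eq_def)
  then have "e \<notin> Poly_Mapping.keys R"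
    using R(2) by (auto simp: weight_less_def)
  then have "e \<in> Poly_Mapping.keys (h ^ N)"
    using e R(1) by (simp add: in_keys_iff lookup_add)
  moreover have "weight_less w (int N * t) (\<Sum>i<N. c i * h ^ i)"
  proof (rule weight_less_sum)
    fix i assume "i \<in> {..<N}"
    have "weight_le w (0 + int i * t) (c i * h ^ i)"
      using \<open>i \<in> {..<N}\<close> c t_max by (intro weight_le_mult weight_le_power) (auto simp: weight_le_def)
    then show "weight_less w (int N * t) (c i * h ^ i)"
      using \<open>i \<in> {..<N}\<close> \<open>t > 0\<close> by (intro weight_le_less_trans) auto
  qed
  moreover have "h ^ N = - (\<Sum>i<N. c i * h ^ i)"
    using rel by (simp add: eq_neg_iff_add_eq_0)
  ultimately show False
    using we by (auto simp: weight_less_def)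
qed

end

section \<open>Normalization of monomial rings\<close>

lemma monomial_ring_add:
  "p \<in> monomial_ring M \<Longrightarrow> q \<in> monomial_ring M \<Longrightarrow> p + q \<in> monomial_ring M"
  using keys_add[of p q] by (auto simp: monomial_ring_def)

lemma monomial_ring_diff:
  "p \<in> monomial_ring M \<Longrightarrow> q \<in> monomial_ring M \<Longrightarrow> p - q \<in> monomial_ring M"
  using keys_diff[of p q] by (auto simp: monomial_ring_def)

lemma monomial_ring_uminus: "p \<in> monomial_ring M \<Longrightarrow> - p \<in> monomial_ring M"
  by (simp add: monomial_ring_def)

lemma single_in_monomial_ring: "a \<in> M \<Longrightarrow> Poly_Mapping.single a c \<in> monomial_ring M"
  by (simp add: monomial_ring_def)

lemma semigroup_gen_add:
  "a \<in> semigroup_gen G \<Longrightarrow> b \<in> semigroup_gen G \<Longrightarrow> a + b \<in> semigroup_gen G"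
  by (induction a rule: semigroup_gen.induct) (auto simp: add.assoc intro: semigroup_gen.add)

lemma monomial_ring_semigroup_gen_mult:
  assumes "p \<in> monomial_ring (semigroup_gen G)" and "q \<in> monomial_ring (semigroup_gen G)"
  shows "p * q \<in> monomial_ring (semigroup_gen G)"
  using keys_mult[of p q] assms by (auto simp: monomial_ring_def intro: semigroup_gen_add)

lemma normalization_elim:
  assumes "z \<in> normalization R"
  obtains f g N c where "f \<in> R" "g \<in> R" "g \<noteq> 0" "z * to_fract g = to_fract f"
    "\<forall>i<N. c i \<in> R" "z ^ N + (\<Sum>i<N. to_fract (c i) * z ^ i) = 0"
proof -
  from assms obtain f g where fg: "z = Fraction_Field.Fract f g" "f \<in> R" "g \<in> R" "g \<noteq> 0"
    by (auto simp: normalization_def frac_field_def)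
  from assms obtain N c where "\<forall>i<N. c i \<in> R" "z ^ N + (\<Sum>i<N. to_fract (c i) * z ^ i) = 0"
    by (auto simp: normalization_def integral_over_def to_fract_def)
  moreover have "z * to_fract g = to_fract f"
    using fg by (simp add: to_fract_def mult_fract eq_fract)
  ultimately show ?thesis
    using that fg(2-4) by blast
qed

lemma embed_monomial_ring_subset_normalization:
  assumes "0 \<in> M"
  shows "embed (monomial_ring M :: 'k::field mpoly set) \<subseteq> normalization (monomial_ring M)"
proof
  fix z :: "'k mpoly fract"
  assume "z \<in> embed (monomial_ring M)"
  then obtain r where r: "r \<in> monomial_ring M" "z = Fraction_Field.Fract r 1"
    by (auto simp: embed_def)
  have "1 \<in> monomial_ring M"
    using \<open>0 \<in> M\<close> by (simp add: monomial_ring_def)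
  then have "z \<in> frac_field (monomial_ring M)"
    unfolding frac_field_def using r by fastforce
  moreover have "integral_over (monomial_ring M) z"
    unfolding integral_over_def using r
    by (intro exI[of _ 1] exI[of _ "\<lambda>_. - r"]) (simp add: monomial_ring_uminus add_fract fract_collapse)
  ultimately show "z \<in> normalization (monomial_ring M)"
    by (simp add: normalization_def)
qed

theorem normalization_monomial_ring_keys:
  fixes z :: "'k::field mpoly fract" and w :: "(nat \<Rightarrow>\<^sub>0 nat) \<Rightarrow> int"
  assumes "z \<in> normalization (monomial_ring M)"
    and Q_add: "\<And>a b. Q a \<Longrightarrow> Q b \<Longrightarrow> Q (a + b)"
    and Q_saturated: "\<And>a b. Q b \<Longrightarrow> Q (a + b) \<Longrightarrow> Q a"
    and w_add: "\<And>a b. w (a + b) = w a + w b"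
    and M: "\<And>a. a \<in> M \<Longrightarrow> Q a \<and> w a \<le> 0"
  shows "\<exists>h. z = to_fract h \<and> (\<forall>a\<in>Poly_Mapping.keys h. Q a \<and> w a \<le> 0)"
proof -
  obtain f g N c where fg: "f \<in> monomial_ring M" "g \<in> monomial_ring M" "g \<noteq> 0"
      and zg: "z * to_fract g = to_fract f"
      and c: "\<forall>i<N. c i \<in> monomial_ring M"
      and rel: "z ^ N + (\<Sum>i<N. to_fract (c i) * z ^ i) = 0"
    using assms(1) by (rule normalization_elim)
  obtain h where h: "z = to_fract h"
    using mpoly_integrally_closed[OF rel fg(3) zg] by blast
  have "to_fract (h * g) = to_fract f"
    using zg by (simp add: h)
  then have "h * g = f"
    by (simp only: to_fract_eq_iff)
  have keys_Q: "\<forall>a\<in>Poly_Mapping.keys p. Q a" if "p \<in> monomial_ring M" for p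
    using that M by (auto simp: monomial_ring_def)
  have Q_h: "\<forall>a\<in>Poly_Mapping.keys h. Q a"
    by (rule keys_factor_in_saturated[OF Q_add Q_saturated \<open>h * g = f\<close> fg(3) keys_Q keys_Q])
      (use fg in simp_all)
  have "to_fract (h ^ N + (\<Sum>i<N. c i * h ^ i)) = 0"
    using rel by (simp add: h to_fract_power)
  then have rel_h: "h ^ N + (\<Sum>i<N. c i * h ^ i) = 0"
    by (simp only: to_fract_eq_0_iff)
  have "weight_le w 0 (c i)" if "i < N" for i
    using c M that by (auto simp: weight_le_def monomial_ring_def)
  then have "weight_le w 0 h"
    using rel_h by (rule integral_weight_nonpos[OF w_add])
  with Q_h h show ?thesis
    by (auto simp: weight_le_def)
qed

corollary is_normal_monomial_ring:
  fixes w :: "(nat \<Rightarrow>\<^sub>0 nat) \<Rightarrow> int"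
  assumes "0 \<in> M"
    and "\<And>a b. Q a \<Longrightarrow> Q b \<Longrightarrow> Q (a + b)"
    and "\<And>a b. Q b \<Longrightarrow> Q (a + b) \<Longrightarrow> Q a"
    and "\<And>a b. w (a + b) = w a + w b"
    and M: "M = {a. Q a \<and> w a \<le> 0}"
  shows "is_normal (monomial_ring M :: 'k::field mpoly set)"
proof -
  have "normalization (monomial_ring M :: 'k mpoly set) \<subseteq> embed (monomial_ring M)"
  proof
    fix z :: "'k mpoly fract"
    assume "z \<in> normalization (monomial_ring M)"
    then obtain h where "z = to_fract h" "\<forall>a\<in>Poly_Mapping.keys h. Q a \<and> w a \<le> 0"
      using normalization_monomial_ring_keys[where Q = Q and w = w] assms(2-4) M by blast
    then show "z \<in> embed (monomial_ring M)"
      by (auto simp: embed_def to_fract_def monomial_ring_def M)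
  qed
  then show ?thesis
    using embed_monomial_ring_subset_normalization[OF \<open>0 \<in> M\<close>] by (auto simp: is_normal_def)
qed

section \<open>Exponent semigroups of Veronese rings\<close>

lemma generator_in_semigroup_gen: "a \<in> G \<Longrightarrow> a \<in> semigroup_gen G"
  using semigroup_gen.add[OF _ semigroup_gen.zero] by fastforce

lemma semigroup_gen_mono: "G \<subseteq> G' \<Longrightarrow> semigroup_gen G \<subseteq> semigroup_gen G'"
proof
  fix a assume "G \<subseteq> G'" and "a \<in> semigroup_gen G"
  from \<open>a \<in> semigroup_gen G\<close> show "a \<in> semigroup_gen G'"
    by (induction a rule: semigroup_gen.induct) (use \<open>G \<subseteq> G'\<close> in \<open>auto intro: semigroup_gen.intros\<close>)
qed

lemma semigroup_gen_induct_add: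
  assumes "a \<in> semigroup_gen G" and "P 0" and "\<And>x y. P x \<Longrightarrow> P y \<Longrightarrow> P (x + y)"
    and "\<And>x. x \<in> G \<Longrightarrow> P x"
  shows "P a"
  using assms(1) by (induction a rule: semigroup_gen.induct) (auto intro: assms)

lemma total_deg_add: "total_deg n (a + b) = total_deg n a + total_deg n b"
  by (simp add: total_deg_def lookup_add sum.distrib)

lemma total_deg_zero [simp]: "total_deg n 0 = 0"
  by (simp add: total_deg_def)

lemma total_deg_single: "total_deg n (Poly_Mapping.single j c) = (if j < n then c else 0)"
  by (simp add: total_deg_def lookup_single when_def)

lemma total_deg_remove:
  "i < n \<Longrightarrow> total_deg n a = Poly_Mapping.lookup a i + (\<Sum>l\<in>{..<n} - {i}. Poly_Mapping.lookup a l)"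
  by (simp add: total_deg_def sum.remove[of "{..<n}" i])

lemma T_exps_lookup_le: "t \<in> T_exps n d \<Longrightarrow> i < n \<Longrightarrow> Poly_Mapping.lookup t i \<le> d"
  using total_deg_remove[of i n t] by (auto simp: T_exps_def)

lemma T_exps_eq_single:
  assumes t: "t \<in> T_exps n d" and "i < n" and ti: "Poly_Mapping.lookup t i = d"
  shows "t = Poly_Mapping.single i d"
proof -
  have "(\<Sum>l\<in>{..<n} - {i}. Poly_Mapping.lookup t l) = 0"
    using total_deg_remove[OF \<open>i < n\<close>, of t] t ti by (auto simp: T_exps_def)
  then have "\<forall>l\<in>{..<n} - {i}. Poly_Mapping.lookup t l = 0"
    by simp
  then show ?thesis
    using t ti \<open>i < n\<close>
    by (intro poly_mapping_eqI) (auto simp: lookup_single when_def T_exps_def in_keys_iff)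
qed

lemma semigroup_gen_T_exps_imp:
  "a \<in> semigroup_gen (T_exps n d) \<Longrightarrow> Poly_Mapping.keys a \<subseteq> {..<n} \<and> d dvd total_deg n a"
  by (erule semigroup_gen_induct_add) (auto simp: total_deg_add keys_add_nat T_exps_def)

lemma exists_below_with_sum:
  fixes a :: "nat \<Rightarrow>\<^sub>0 nat"
  assumes "finite I" and "r \<le> (\<Sum>l\<in>I. Poly_Mapping.lookup a l)"
  shows "\<exists>u. (\<forall>l. Poly_Mapping.lookup u l \<le> Poly_Mapping.lookup a l) \<and> Poly_Mapping.keys u \<subseteq> I
    \<and> (\<Sum>l\<in>I. Poly_Mapping.lookup u l) = r"
  using assms
proof (induction I arbitrary: r rule: finite_induct)
  case empty
  then show ?case
    by (intro exI[of _ 0]) simp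
next
  case (insert l I)
  define x where "x = min (Poly_Mapping.lookup a l) r"
  have "r - x \<le> (\<Sum>l\<in>I. Poly_Mapping.lookup a l)"
    using insert x_def by auto
  then obtain u where u: "\<forall>l. Poly_Mapping.lookup u l \<le> Poly_Mapping.lookup a l"
     "Poly_Mapping.keys u \<subseteq> I" "(\<Sum>l\<in>I. Poly_Mapping.lookup u l) = r - x"
    using insert.IH by blast
  have ul: "Poly_Mapping.lookup u l = 0"
    using u(2) insert.hyps(2) by (auto simp: in_keys_iff)
  have "(\<Sum>l'\<in>I. Poly_Mapping.lookup (u + Poly_Mapping.single l x) l') = r - x"
    using insert.hyps(2) u(3) by (simp add: lookup_add lookup_single when_def sum.distrib sum.neutral)
  then have "(\<Sum>l'\<in>insert l I. Poly_Mapping.lookup (u + Poly_Mapping.single l x) l') = r"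
    using insert.hyps ul x_def by (simp add: lookup_add)
  moreover have "\<forall>l'. Poly_Mapping.lookup (u + Poly_Mapping.single l x) l' \<le> Poly_Mapping.lookup a l'"
    using u(1) ul by (auto simp: lookup_add lookup_single when_def x_def)
  moreover have "Poly_Mapping.keys (u + Poly_Mapping.single l x) \<subseteq> insert l I"
    using u(2) by (auto simp: keys_add_nat)
  ultimately show ?case
    by blast
qed

lemma exists_generator_below:
  assumes "i < n" and "d \<ge> 1" and "Poly_Mapping.keys a \<subseteq> {..<n}"
    and deg: "total_deg n a = Suc j * d" and ai: "Poly_Mapping.lookup a i \<le> Suc j * (d - 1)"
  obtains t where "t \<in> T_exps n d - {Poly_Mapping.single i d}"
    and "\<forall>l. Poly_Mapping.lookup t l \<le> Poly_Mapping.lookup a l"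
    and "Poly_Mapping.lookup a i - Poly_Mapping.lookup t i \<le> j * (d - 1)"
proof -
  define I where "I = {..<n} - {i}"
  define x where "x = min (Poly_Mapping.lookup a i) (d - 1)"
  have sum_a: "Poly_Mapping.lookup a i + (\<Sum>l\<in>I. Poly_Mapping.lookup a l) = Suc j * d"
    using total_deg_remove[OF \<open>i < n\<close>, of a] deg by (simp add: I_def)
  have "d - x \<le> (\<Sum>l\<in>I. Poly_Mapping.lookup a l)"
  proof (cases "Poly_Mapping.lookup a i \<le> d - 1")
    case True
    then show ?thesis
      using sum_a \<open>d \<ge> 1\<close> by (simp add: x_def)
  next
    case False
    moreover have "Suc j * (d - 1) + Suc j \<le> Suc j * d"
      using \<open>d \<ge> 1\<close> by (cases d) auto
    ultimately show ?thesis
      using sum_a ai by (simp add: x_def)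
  qed
  then obtain u where u: "\<forall>l. Poly_Mapping.lookup u l \<le> Poly_Mapping.lookup a l"
      "Poly_Mapping.keys u \<subseteq> I" "(\<Sum>l\<in>I. Poly_Mapping.lookup u l) = d - x"
    using exists_below_with_sum[of I "d - x" a] by (auto simp: I_def)
  define t where "t = u + Poly_Mapping.single i x"
  have ui: "Poly_Mapping.lookup u i = 0"
    using u(2) by (auto simp: I_def in_keys_iff)
  have ti: "Poly_Mapping.lookup t i = x"
    using ui by (simp add: t_def lookup_add)
  have "(\<Sum>l\<in>I. Poly_Mapping.lookup t l) = d - x"
    using u(3) by (simp add: t_def lookup_add lookup_single when_def sum.distrib I_def)
  then have "total_deg n t = d"
    using total_deg_remove[OF \<open>i < n\<close>, of t] ti \<open>d \<ge> 1\<close> by (simp add: I_def x_def)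
  moreover have "Poly_Mapping.keys t \<subseteq> {..<n}"
    using u(2) \<open>i < n\<close> by (auto simp: t_def keys_add_nat I_def)
  moreover have "t \<noteq> Poly_Mapping.single i d"
    using ti \<open>d \<ge> 1\<close> by (auto simp: x_def)
  moreover have "\<forall>l. Poly_Mapping.lookup t l \<le> Poly_Mapping.lookup a l"
    using u(1) ui by (auto simp: t_def lookup_add lookup_single when_def x_def)
  moreover have "Poly_Mapping.lookup a i - Poly_Mapping.lookup t i \<le> j * (d - 1)"
    using ai ti by (auto simp: x_def)
  ultimately show ?thesis
    using that by (simp add: T_exps_def)
qed

lemma mem_semigroup_gen_pinched_single:
  assumes "i < n" and "d \<ge> 1"
  shows "Poly_Mapping.keys a \<subseteq> {..<n} \<Longrightarrow> total_deg n a = j * d \<Longrightarrow> Poly_Mapping.lookup a i \<le> j * (d - 1)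
    \<Longrightarrow> a \<in> semigroup_gen (T_exps n d - {Poly_Mapping.single i d})"
proof (induction j arbitrary: a)
  case 0
  then have "a = 0"
    by (intro poly_mapping_eqI) (auto simp: total_deg_def in_keys_iff)
  then show ?case
    by (simp add: semigroup_gen.zero)
next
  case (Suc j)
  obtain t where t: "t \<in> T_exps n d - {Poly_Mapping.single i d}"
      "\<forall>l. Poly_Mapping.lookup t l \<le> Poly_Mapping.lookup a l"
      "Poly_Mapping.lookup a i - Poly_Mapping.lookup t i \<le> j * (d - 1)"
    using exists_generator_below[OF assms Suc.prems] by blast
  have a: "a = t + (a - t)"
    using t(2) by (intro poly_mapping_eqI) (simp add: lookup_add lookup_minus)
  have "Poly_Mapping.keys (a - t) \<subseteq> {..<n}"
  proof
    fix l assume "l \<in> Poly_Mapping.keys (a - t)"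
    then have "l \<in> Poly_Mapping.keys a"
      by (auto simp: in_keys_iff lookup_minus)
    then show "l \<in> {..<n}"
      using Suc.prems(1) by blast
  qed
  moreover have "total_deg n (a - t) = j * d"
    using Suc.prems(2) t(1) total_deg_add[of n t "a - t"] by (simp add: T_exps_def flip: a)
  moreover have "Poly_Mapping.lookup (a - t) i \<le> j * (d - 1)"
    using t(3) by (simp add: lookup_minus)
  ultimately have "a - t \<in> semigroup_gen (T_exps n d - {Poly_Mapping.single i d})"
    by (rule Suc.IH)
  with t(1) show ?case
    by (subst a) (rule semigroup_gen.add)
qed

lemma lookup_0_plus_lookup_1_le: "n \<ge> 2 \<Longrightarrow> Poly_Mapping.lookup a 0 + Poly_Mapping.lookup a 1 \<le> total_deg n a"
  using total_deg_remove[of 0 n a] member_le_sum[of 1 "{..<n} - {0}" "Poly_Mapping.lookup a"] by simp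

lemma semigroup_gen_T_exps_iff:
  assumes "n \<ge> 2" and "d \<ge> 2"
  shows "a \<in> semigroup_gen (T_exps n d) \<longleftrightarrow> Poly_Mapping.keys a \<subseteq> {..<n} \<and> d dvd total_deg n a"
proof
  assume a: "Poly_Mapping.keys a \<subseteq> {..<n} \<and> d dvd total_deg n a"
  then obtain j where j: "total_deg n a = j * d"
    by (metis dvdE mult.commute)
  have "\<exists>i<n. Poly_Mapping.lookup a i \<le> j * (d - 1)"
  proof (cases "Poly_Mapping.lookup a 0 \<le> j * (d - 1)")
    case False
    have "j * 1 \<le> j * (d - 1)"
      using \<open>d \<ge> 2\<close> by (intro mult_le_mono2) simp
    moreover have "j * (d - 1) + j = j * d"
      using \<open>d \<ge> 2\<close> by (cases d) (auto simp: algebra_simps)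
    ultimately have "Poly_Mapping.lookup a 1 \<le> j * (d - 1)"
      using False lookup_0_plus_lookup_1_le[OF \<open>n \<ge> 2\<close>, of a] j by linarith
    then show ?thesis
      using \<open>n \<ge> 2\<close> by (intro exI[of _ 1]) auto
  qed (use \<open>n \<ge> 2\<close> in \<open>auto intro: exI[of _ 0]\<close>)
  then obtain i where "i < n" "Poly_Mapping.lookup a i \<le> j * (d - 1)"
    by blast
  then have "a \<in> semigroup_gen (T_exps n d - {Poly_Mapping.single i d})"
    using mem_semigroup_gen_pinched_single[of i n d a j] \<open>d \<ge> 2\<close> a j by simp
  then show "a \<in> semigroup_gen (T_exps n d)"
    using semigroup_gen_mono[of "T_exps n d - {Poly_Mapping.single i d}" "T_exps n d"] by blast
qed (rule semigroup_gen_T_exps_imp)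

lemma semigroup_gen_pinched_single_iff:
  assumes "i < n" and "d \<ge> 1"
  shows "a \<in> semigroup_gen (T_exps n d - {Poly_Mapping.single i d}) \<longleftrightarrow>
    Poly_Mapping.keys a \<subseteq> {..<n} \<and> d dvd total_deg n a \<and>
    d * Poly_Mapping.lookup a i \<le> (d - 1) * total_deg n a"
proof
  assume a: "a \<in> semigroup_gen (T_exps n d - {Poly_Mapping.single i d})"
  then have "Poly_Mapping.keys a \<subseteq> {..<n} \<and> d dvd total_deg n a"
    using semigroup_gen_mono[of "T_exps n d - {Poly_Mapping.single i d}" "T_exps n d"]
      semigroup_gen_T_exps_imp by blast
  moreover from a have "d * Poly_Mapping.lookup a i \<le> (d - 1) * total_deg n a"
  proof (rule semigroup_gen_induct_add)
    fix t assume t: "t \<in> T_exps n d - {Poly_Mapping.single i d}"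
    then have "Poly_Mapping.lookup t i \<le> d - 1"
      using T_exps_lookup_le[of t n d i] T_exps_eq_single[of t n d i] \<open>i < n\<close> by fastforce
    then show "d * Poly_Mapping.lookup t i \<le> (d - 1) * total_deg n t"
      using t by (simp add: T_exps_def mult.commute)
  qed (simp_all add: lookup_add total_deg_add algebra_simps)
  ultimately show "Poly_Mapping.keys a \<subseteq> {..<n} \<and> d dvd total_deg n a \<and>
      d * Poly_Mapping.lookup a i \<le> (d - 1) * total_deg n a"
    by blast
next
  assume a: "Poly_Mapping.keys a \<subseteq> {..<n} \<and> d dvd total_deg n a \<and>
    d * Poly_Mapping.lookup a i \<le> (d - 1) * total_deg n a"
  then obtain j where j: "total_deg n a = j * d"
    by (metis dvdE mult.commute)
  then have "d * Poly_Mapping.lookup a i \<le> d * (j * (d - 1))"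
    using a by (simp add: algebra_simps)
  then have "Poly_Mapping.lookup a i \<le> j * (d - 1)"
    using \<open>d \<ge> 1\<close> by simp
  then show "a \<in> semigroup_gen (T_exps n d - {Poly_Mapping.single i d})"
    using mem_semigroup_gen_pinched_single[OF assms] a j by blast
qed

lemma single_even_in_pinched_2_2:
  assumes "i < 2"
  shows "Poly_Mapping.single i (2 * e) \<in>
    semigroup_gen (T_exps 2 2 - {Poly_Mapping.single 0 1 + Poly_Mapping.single 1 1})"
proof (induction e)
  case (Suc e)
  have "Poly_Mapping.lookup (Poly_Mapping.single 0 1 + Poly_Mapping.single 1 1) i = (1::nat)"
    using \<open>i < 2\<close> by (auto simp: lookup_add lookup_single less_2_cases_iff)
  then have "Poly_Mapping.single i 2 \<noteq> Poly_Mapping.single 0 1 + Poly_Mapping.single 1 (1::nat)"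
    by (metis lookup_single_eq numeral_One numeral_eq_iff semiring_norm(85))
  then have "Poly_Mapping.single i 2 \<in> T_exps 2 2 - {Poly_Mapping.single 0 1 + Poly_Mapping.single 1 1}"
    using \<open>i < 2\<close> by (auto simp: T_exps_def total_deg_single)
  moreover have "Poly_Mapping.single i (2 * Suc e) = Poly_Mapping.single i 2 + Poly_Mapping.single i (2 * e)"
    by (simp flip: single_add)
  ultimately show ?case
    using Suc by (simp add: semigroup_gen.add)
qed (simp add: semigroup_gen.zero)

lemma semigroup_gen_T_2_2_pinched_iff:
  "a \<in> semigroup_gen (T_exps 2 2 - {Poly_Mapping.single 0 1 + Poly_Mapping.single 1 1}) \<longleftrightarrow>
   Poly_Mapping.keys a \<subseteq> {..<2} \<and> even (Poly_Mapping.lookup a 0) \<and> even (Poly_Mapping.lookup a 1)"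
  (is "a \<in> semigroup_gen ?G \<longleftrightarrow> ?Q a")
proof
  assume "a \<in> semigroup_gen ?G"
  then show "?Q a"
  proof (rule semigroup_gen_induct_add)
    fix t assume t: "t \<in> ?G"
    then have keys: "Poly_Mapping.keys t \<subseteq> {..<2}"
      and sum: "Poly_Mapping.lookup t 0 + Poly_Mapping.lookup t 1 = 2"
      by (auto simp: T_exps_def total_deg_def numeral_2_eq_2)
    have "t = Poly_Mapping.single 0 1 + Poly_Mapping.single 1 1" if "Poly_Mapping.lookup t 0 = 1"
    proof (rule poly_mapping_eqI)
      fix x
      show "Poly_Mapping.lookup t x = Poly_Mapping.lookup (Poly_Mapping.single 0 1 + Poly_Mapping.single 1 1) x"
        using that sum keys
        by (cases "x < 2") (auto simp: lookup_add lookup_single when_def in_keys_iff less_2_cases_iff)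
    qed
    then have "Poly_Mapping.lookup t 0 = 0 \<or> Poly_Mapping.lookup t 0 = 2"
      using sum t by fastforce
    then show "?Q t"
      using sum keys by auto
  qed (auto simp: keys_add_nat lookup_add)
next
  assume "?Q a"
  then obtain e0 e1 where e: "Poly_Mapping.lookup a 0 = 2 * e0" "Poly_Mapping.lookup a 1 = 2 * e1"
    by (auto elim!: evenE)
  have "a = Poly_Mapping.single 0 (2 * e0) + Poly_Mapping.single 1 (2 * e1)"
  proof (rule poly_mapping_eqI)
    fix x
    show "Poly_Mapping.lookup a x = Poly_Mapping.lookup (Poly_Mapping.single 0 (2 * e0) + Poly_Mapping.single 1 (2 * e1)) x"
      using e \<open>?Q a\<close>
      by (cases "x < 2") (auto simp: lookup_add lookup_single when_def in_keys_iff less_2_cases_iff)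
  qed
  then show "a \<in> semigroup_gen ?G"
    using single_even_in_pinched_2_2[of 0 e0] single_even_in_pinched_2_2[of 1 e1]
    by (simp add: semigroup_gen_add)
qed

lemma lookup_le_max_exp: "l < n \<Longrightarrow> Poly_Mapping.lookup m l \<le> max_exp n m"
  by (auto simp: max_exp_def)

lemma max_exp_eq_imp_single:
  assumes m: "m \<in> T_exps n d" and "max_exp n m = d" and "n \<ge> 1"
  shows "\<exists>i<n. m = Poly_Mapping.single i d"
proof -
  have "max_exp n m \<in> Poly_Mapping.lookup m ` {..<n}"
    unfolding max_exp_def using \<open>n \<ge> 1\<close> by (intro Max_in) (auto simp: lessThan_empty_iff)
  then obtain i where "i < n" "Poly_Mapping.lookup m i = d"
    using \<open>max_exp n m = d\<close> by auto
  then show ?thesis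
    using T_exps_eq_single[OF m] by blast
qed

lemma max_exp_less_imp_two_coordinates:
  assumes m: "m \<in> T_exps n d" and "max_exp n m < d" and "d \<ge> 1"
  shows "\<exists>i j. i < n \<and> j < n \<and> i \<noteq> j \<and> Poly_Mapping.lookup m i > 0 \<and> Poly_Mapping.lookup m j > 0"
proof -
  have deg: "total_deg n m = d"
    using m by (simp add: T_exps_def)
  then obtain i where i: "i < n" "Poly_Mapping.lookup m i > 0"
    using \<open>d \<ge> 1\<close> by (metis not_gr0 sum.neutral total_deg_def lessThan_iff not_one_le_zero)
  have "Poly_Mapping.lookup m i < d"
    using lookup_le_max_exp[OF i(1), of m] \<open>max_exp n m < d\<close> by simp
  then have "(\<Sum>l\<in>{..<n} - {i}. Poly_Mapping.lookup m l) \<noteq> 0"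
    using total_deg_remove[OF i(1), of m] deg by linarith
  then obtain j where "j \<in> {..<n} - {i}" "Poly_Mapping.lookup m j > 0"
    by (metis not_gr0 sum.neutral)
  with i show ?thesis
    by blast
qed

definition move_unit :: "(nat \<Rightarrow>\<^sub>0 nat) \<Rightarrow> nat \<Rightarrow> nat \<Rightarrow> nat \<Rightarrow>\<^sub>0 nat" where
  "move_unit b j i = (b - Poly_Mapping.single j 1) + Poly_Mapping.single i 1"

lemma lookup_move_unit:
  "Poly_Mapping.lookup b j \<ge> 1 \<Longrightarrow> Poly_Mapping.lookup (move_unit b j i) x =
     Poly_Mapping.lookup b x - (if x = j then 1 else 0) + (if x = i then 1 else 0)"
  by (simp add: move_unit_def lookup_add lookup_minus lookup_single when_def)

lemma lookup_move_unit_single: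
  "d \<ge> 1 \<Longrightarrow> Poly_Mapping.lookup (move_unit (Poly_Mapping.single k d) k l) x =
     (if x = k then d - 1 else 0) + (if x = l then 1 else 0)"
  by (simp add: lookup_move_unit lookup_single when_def)

lemma move_unit_in_T_exps:
  assumes b: "b \<in> T_exps n d" and j: "Poly_Mapping.lookup b j \<ge> 1" and "i < n"
  shows "move_unit b j i \<in> T_exps n d"
proof -
  have "j \<in> Poly_Mapping.keys b"
    using j by (simp add: in_keys_iff)
  then have "j < n"
    using b by (auto simp: T_exps_def)
  have b': "b = (b - Poly_Mapping.single j 1) + Poly_Mapping.single j 1"
    using j by (intro poly_mapping_eqI) (auto simp: lookup_add lookup_minus lookup_single when_def)
  have "total_deg n (move_unit b j i) = total_deg n b"
    using \<open>i < n\<close> \<open>j < n\<close>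
    by (subst (2) b') (simp add: move_unit_def total_deg_add total_deg_single)
  moreover have "Poly_Mapping.keys (b - Poly_Mapping.single j 1) \<subseteq> Poly_Mapping.keys b"
    by (auto simp: in_keys_iff lookup_minus)
  then have "Poly_Mapping.keys (move_unit b j i) \<subseteq> {..<n}"
    using b \<open>i < n\<close> by (auto simp: move_unit_def keys_add_nat T_exps_def)
  ultimately show ?thesis
    using b by (simp add: T_exps_def)
qed

lemma move_unit_in_pinched:
  assumes m: "m \<in> T_exps n d" and "Poly_Mapping.lookup m j > 0" and "i < n" and "i \<noteq> j"
  shows "move_unit m j i \<in> T_exps n d - {m}"
proof -
  have "Poly_Mapping.lookup (move_unit m j i) i \<noteq> Poly_Mapping.lookup m i"
    using assms by (simp add: lookup_move_unit)
  then show ?thesis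
    using move_unit_in_T_exps[OF m _ \<open>i < n\<close>] assms(2) by auto
qed

lemma double_in_pinched:
  assumes m: "m \<in> T_exps n d" and "i < n" "j < n" "i \<noteq> j"
    and "Poly_Mapping.lookup m i > 0" "Poly_Mapping.lookup m j > 0"
  shows "m + m \<in> semigroup_gen (T_exps n d - {m})"
proof -
  have "move_unit m j i + move_unit m i j = m + m"
    using assms by (intro poly_mapping_eqI) (auto simp: lookup_add lookup_move_unit)
  moreover have "move_unit m j i + move_unit m i j \<in> semigroup_gen (T_exps n d - {m})"
    using assms by (intro semigroup_gen_add generator_in_semigroup_gen move_unit_in_pinched) auto
  ultimately show ?thesis
    by simp
qed

lemma semigroup_gen_split_pinched:
  assumes "a \<in> semigroup_gen G" and mm: "m + m \<in> semigroup_gen (G - {m})"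
  shows "a \<in> semigroup_gen (G - {m}) \<or> (\<exists>b\<in>semigroup_gen (G - {m}). a = m + b)"
  using assms(1)
proof (induction a rule: semigroup_gen.induct)
  case zero
  then show ?case
    by (simp add: semigroup_gen.zero)
next
  case (add t b)
  show ?case
  proof (cases "t = m")
    case False
    with add.hyps have "t \<in> G - {m}"
      by simp
    with add.IH show ?thesis
      by (metis add.left_commute semigroup_gen.add)
  next
    case True
    with add.IH mm show ?thesis
      by (metis add.assoc semigroup_gen_add)
  qed
qed

lemma single_and_shift_in_pinched:
  assumes m: "m \<in> T_exps n d" and "max_exp n m < d" and "d \<ge> 2"
    and "k < n" "l < n" "k \<noteq> l" and "Poly_Mapping.lookup m l > 0"
    and ne: "move_unit (Poly_Mapping.single k d) k l \<noteq> m"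
  shows "Poly_Mapping.single k d \<in> semigroup_gen (T_exps n d - {m}) \<and>
         m + Poly_Mapping.single k d \<in> semigroup_gen (T_exps n d - {m})"
proof -
  have sT: "Poly_Mapping.single k d \<in> T_exps n d"
    using \<open>k < n\<close> by (simp add: T_exps_def total_deg_single)
  moreover have "Poly_Mapping.single k d \<noteq> m"
    using lookup_le_max_exp[OF \<open>k < n\<close>, of m] \<open>max_exp n m < d\<close> by auto
  ultimately have "Poly_Mapping.single k d \<in> T_exps n d - {m}"
    by simp
  moreover have "move_unit m l k + move_unit (Poly_Mapping.single k d) k l = m + Poly_Mapping.single k d"
    using assms by (intro poly_mapping_eqI) (auto simp: lookup_add lookup_move_unit lookup_single when_def)
  moreover have "move_unit (Poly_Mapping.single k d) k l \<in> T_exps n d - {m}"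
    using move_unit_in_T_exps[OF sT _ \<open>l < n\<close>] \<open>d \<ge> 2\<close> ne by simp
  then have "move_unit m l k + move_unit (Poly_Mapping.single k d) k l \<in> semigroup_gen (T_exps n d - {m})"
    using assms by (intro semigroup_gen_add generator_in_semigroup_gen move_unit_in_pinched) auto
  ultimately show ?thesis
    using generator_in_semigroup_gen by metis
qed

lemma move_unit_single_both_eq:
  assumes "i \<noteq> j" and "d \<ge> 1"
    and "move_unit (Poly_Mapping.single i d) i j = m" "move_unit (Poly_Mapping.single j d) j i = m"
  shows "d = 2 \<and> m = Poly_Mapping.single i 1 + Poly_Mapping.single j 1"
proof -
  have "Poly_Mapping.lookup m i = d - 1" "Poly_Mapping.lookup m i = 1"
    using lookup_move_unit_single[OF \<open>d \<ge> 1\<close>, of i j i] lookup_move_unit_single[OF \<open>d \<ge> 1\<close>, of j i i]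
      assms by simp_all
  then have "d = 2"
    using \<open>d \<ge> 1\<close> by simp
  moreover have "m = Poly_Mapping.single i 1 + Poly_Mapping.single j 1"
  proof (rule poly_mapping_eqI)
    fix x
    show "Poly_Mapping.lookup m x = Poly_Mapping.lookup (Poly_Mapping.single i 1 + Poly_Mapping.single j 1) x"
      using lookup_move_unit_single[OF \<open>d \<ge> 1\<close>, of i j x] assms \<open>d = 2\<close>
      by (simp add: lookup_add lookup_single)
  qed
  ultimately show ?thesis
    by blast
qed

lemma exists_single_and_shift_in_pinched:
  assumes m: "m \<in> T_exps n d" and mx: "max_exp n m < d" and "n \<ge> 2" and d: "d \<ge> 2"
    and not_special: "\<not> (n = 2 \<and> d = 2 \<and> m = Poly_Mapping.single 0 1 + Poly_Mapping.single 1 1)"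
  shows "\<exists>k<n. Poly_Mapping.single k d \<in> semigroup_gen (T_exps n d - {m}) \<and>
         m + Poly_Mapping.single k d \<in> semigroup_gen (T_exps n d - {m})"
proof -
  obtain i j where ij: "i < n" "j < n" "i \<noteq> j" "Poly_Mapping.lookup m i > 0" "Poly_Mapping.lookup m j > 0"
    using max_exp_less_imp_two_coordinates[OF m mx] d by auto
  consider "move_unit (Poly_Mapping.single i d) i j \<noteq> m"
    | "move_unit (Poly_Mapping.single j d) j i \<noteq> m"
    | "move_unit (Poly_Mapping.single i d) i j = m" "move_unit (Poly_Mapping.single j d) j i = m"
    by blast
  then show ?thesis
  proof cases
    case 1
    then show ?thesis
      using single_and_shift_in_pinched[OF m mx d ij(1,2,3,5)] ij(1) by blast
  next
    case 2
    then show ?thesis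
      using single_and_shift_in_pinched[OF m mx d ij(2,1) _ ij(4)] ij by metis
  next
    case 3
    then have "d = 2" and m_ij: "m = Poly_Mapping.single i 1 + Poly_Mapping.single j 1"
      using move_unit_single_both_eq[OF ij(3) _ 3] d by simp_all
    have "n \<noteq> 2"
    proof
      assume "n = 2"
      then have "m = Poly_Mapping.single 0 1 + Poly_Mapping.single 1 1"
        using ij m_ij by (auto simp: add.commute less_2_cases_iff)
      with not_special \<open>n = 2\<close> \<open>d = 2\<close> show False
        by blast
    qed
    then have "card {i, j} < card {..<n}"
      using \<open>n \<ge> 2\<close> ij(3) by simp
    then have "\<not> {..<n} \<subseteq> {i, j}"
      using card_mono[of "{i, j}" "{..<n}"] by fastforce
    then obtain k where k: "k < n" "k \<noteq> i" "k \<noteq> j"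
      by blast
    have "Poly_Mapping.lookup (move_unit (Poly_Mapping.single k d) k i) j = 0"
      using k ij d by (simp add: lookup_move_unit_single)
    then have "move_unit (Poly_Mapping.single k d) k i \<noteq> m"
      using ij(5) by auto
    then show ?thesis
      using single_and_shift_in_pinched[OF m mx d k(1) ij(1) k(2) ij(4)] k(1) by blast
  qed
qed

lemma monomial_ring_decompose_shift:
  assumes "v \<in> monomial_ring (M \<union> (\<lambda>b. m + b) ` M)"
  shows "\<exists>p q. p \<in> monomial_ring M \<and> q \<in> monomial_ring M \<and> v = p + Poly_Mapping.single m 1 * q"
proof -
  define p where "p = restrict_keys (\<lambda>a. a \<in> M) v"
  define r where "r = restrict_keys (\<lambda>a. a \<notin> M) v"
  define q where "q = (\<Sum>a\<in>Poly_Mapping.keys r. Poly_Mapping.single (a - m) (Poly_Mapping.lookup r a))"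
  have r_keys: "\<exists>b\<in>M. a = m + b" if "a \<in> Poly_Mapping.keys r" for a
    using that assms by (auto simp: r_def keys_restrict_keys monomial_ring_def)
  have "p \<in> monomial_ring M"
    by (auto simp: p_def monomial_ring_def keys_restrict_keys)
  moreover have "Poly_Mapping.keys q \<subseteq> M"
    using keys_sum[of "\<lambda>a. Poly_Mapping.single (a - m) (Poly_Mapping.lookup r a)" "Poly_Mapping.keys r"]
      r_keys by (force simp: q_def)
  then have "q \<in> monomial_ring M"
    by (simp add: monomial_ring_def)
  moreover have "Poly_Mapping.single m 1 * q = r"
  proof -
    have "Poly_Mapping.single m 1 * q =
        (\<Sum>a\<in>Poly_Mapping.keys r. Poly_Mapping.single (m + (a - m)) (Poly_Mapping.lookup r a))"
      by (simp add: q_def sum_distrib_left mult_single)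
    also have "\<dots> = (\<Sum>a\<in>Poly_Mapping.keys r. Poly_Mapping.single a (Poly_Mapping.lookup r a))"
      using r_keys by (intro sum.cong) fastforce+
    finally show ?thesis
      by (simp flip: poly_mapping_sum_single)
  qed
  moreover have "v = p + r"
    unfolding p_def r_def by (rule restrict_keys_split)
  ultimately show ?thesis
    by blast
qed

lemma shifted_sum_in_normalization:
  fixes p q :: "'k::field mpoly" and G :: "(nat \<Rightarrow>\<^sub>0 nat) set"
  defines "R \<equiv> monomial_ring (semigroup_gen G)"
  assumes "p \<in> R" and "q \<in> R" and "m + m \<in> semigroup_gen G"
    and "e \<in> semigroup_gen G" and "m + e \<in> semigroup_gen G"
  shows "Fraction_Field.Fract (p + Poly_Mapping.single m 1 * q) 1 \<in> normalization R"
proof -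
  define v where "v = p + Poly_Mapping.single m 1 * q"
  define u :: "'k mpoly" where "u = Poly_Mapping.single e 1"
  have "u \<in> R"
    using assms by (simp add: u_def single_in_monomial_ring)
  have "u \<noteq> 0"
    unfolding u_def by (metis lookup_single_eq lookup_zero one_neq_zero)
  have "v * u = p * u + Poly_Mapping.single (m + e) 1 * q"
    by (simp add: v_def u_def mult_single algebra_simps)
  then have "v * u \<in> R"
    using assms \<open>u \<in> R\<close>
    by (simp add: monomial_ring_add monomial_ring_semigroup_gen_mult single_in_monomial_ring)
  moreover have "Fraction_Field.Fract v 1 = Fraction_Field.Fract (v * u) u"
    using \<open>u \<noteq> 0\<close> by (simp add: eq_fract)
  ultimately have "Fraction_Field.Fract v 1 \<in> frac_field R"
    unfolding frac_field_def using \<open>u \<in> R\<close> \<open>u \<noteq> 0\<close> by blast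
  (* v is a root of (X - p)^2 - x^(2m) q^2 *)
  define c where "c i = (if i = 0 then p * p - Poly_Mapping.single (m + m) 1 * q * q else - (p + p))" for i :: nat
  have "p * p - Poly_Mapping.single (m + m) 1 * q * q \<in> R" "- (p + p) \<in> R"
    using assms unfolding R_def
    by (intro monomial_ring_diff monomial_ring_uminus monomial_ring_add
        monomial_ring_semigroup_gen_mult single_in_monomial_ring; simp)+
  then have "c i \<in> R" for i
    by (simp add: c_def)
  moreover have "v ^ 2 + (c 0 + c 1 * v) = 0"
  proof -
    have "Poly_Mapping.single (m + m) (1::'k) = Poly_Mapping.single m 1 * Poly_Mapping.single m 1"
      by (simp add: mult_single)
    then show ?thesis
      by (simp add: c_def v_def power2_eq_square algebra_simps)
  qed
  then have "to_fract (v ^ 2 + (c 0 + c 1 * v)) = 0"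
    by simp
  then have "Fraction_Field.Fract v 1 ^ 2 +
      (\<Sum>i<2. Fraction_Field.Fract (c i) 1 * Fraction_Field.Fract v 1 ^ i) = 0"
    by (simp add: numeral_2_eq_2 flip: to_fract_def to_fract_power)
  ultimately have "integral_over R (Fraction_Field.Fract v 1)"
    unfolding integral_over_def by blast
  with \<open>Fraction_Field.Fract v 1 \<in> frac_field R\<close> show ?thesis
    by (simp add: normalization_def v_def)
qed

section \<open>Pinched Veronese rings\<close>

lemma is_normal_pinched_veronese_2_2:
  "is_normal (pinched_veronese 2 2 (Poly_Mapping.single 0 1 + Poly_Mapping.single 1 1) :: 'k::field mpoly set)"
proof -
  define Q where "Q a \<longleftrightarrow> Poly_Mapping.keys a \<subseteq> {..<2} \<and>
    even (Poly_Mapping.lookup a 0) \<and> even (Poly_Mapping.lookup a 1)" for a :: "nat \<Rightarrow>\<^sub>0 nat"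
  show ?thesis
    unfolding pinched_veronese_def
  proof (rule is_normal_monomial_ring[where Q = Q and w = "\<lambda>_. 0"])
    show "semigroup_gen (T_exps 2 2 - {Poly_Mapping.single 0 1 + Poly_Mapping.single 1 1}) = {a. Q a \<and> (0::int) \<le> 0}"
      unfolding set_eq_iff mem_Collect_eq semigroup_gen_T_2_2_pinched_iff Q_def by simp
    show "Q (a + b)" if "Q a" "Q b" for a b
      using that by (auto simp: Q_def keys_add_nat lookup_add)
    show "Q a" if "Q b" "Q (a + b)" for a b
      using that by (auto simp: Q_def keys_add_nat lookup_add)
  qed (simp_all add: semigroup_gen.zero)
qed

lemma is_normal_pinched_veronese_single:
  assumes "i < n" and "d \<ge> 1"
  shows "is_normal (pinched_veronese n d (Poly_Mapping.single i d) :: 'k::field mpoly set)"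
proof -
  define Q where "Q a \<longleftrightarrow> Poly_Mapping.keys a \<subseteq> {..<n} \<and> d dvd total_deg n a" for a
  define w where "w a = int (d * Poly_Mapping.lookup a i) - int ((d - 1) * total_deg n a)" for a
  show ?thesis
    unfolding pinched_veronese_def
  proof (rule is_normal_monomial_ring[where Q = Q and w = w])
    have "w a \<le> 0 \<longleftrightarrow> d * Poly_Mapping.lookup a i \<le> (d - 1) * total_deg n a" for a
      unfolding w_def by (simp only: diff_le_0_iff_le of_nat_le_iff)
    then show "semigroup_gen (T_exps n d - {Poly_Mapping.single i d}) = {a. Q a \<and> w a \<le> 0}"
      unfolding set_eq_iff mem_Collect_eq semigroup_gen_pinched_single_iff[OF assms] Q_def by simp
    show "Q (a + b)" if "Q a" "Q b" for a b
      using that by (auto simp: Q_def keys_add_nat total_deg_add)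
    show "Q a" if "Q b" "Q (a + b)" for a b
      using that by (auto simp: Q_def keys_add_nat total_deg_add dvd_add_left_iff)
    show "w (a + b) = w a + w b" for a b
      by (simp add: w_def lookup_add total_deg_add add_mult_distrib2)
  qed (rule semigroup_gen.zero)
qed

lemma normalization_pinched_veronese_subset:
  assumes "n \<ge> 2" and "d \<ge> 2"
  shows "normalization (pinched_veronese n d m :: 'k::field mpoly set) \<subseteq> embed (veronese n d)"
proof
  let ?Q = "\<lambda>a. Poly_Mapping.keys a \<subseteq> {..<n} \<and> d dvd total_deg n a"
  have Q_add: "?Q (a + b)" if "?Q a" "?Q b" for a b
    using that by (auto simp: keys_add_nat total_deg_add)
  have Q_saturated: "?Q a" if "?Q b" "?Q (a + b)" for a b
    using that by (auto simp: keys_add_nat total_deg_add dvd_add_left_iff)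
  have M: "?Q a \<and> (0::int) \<le> 0" if "a \<in> semigroup_gen (T_exps n d - {m})" for a
    using that semigroup_gen_mono[of "T_exps n d - {m}" "T_exps n d"] semigroup_gen_T_exps_imp by blast
  fix z :: "'k mpoly fract"
  assume z: "z \<in> normalization (pinched_veronese n d m)"
  have "\<exists>h. z = to_fract h \<and> (\<forall>a\<in>Poly_Mapping.keys h. ?Q a \<and> (0::int) \<le> 0)"
    by (rule normalization_monomial_ring_keys[where Q = ?Q and w = "\<lambda>_. 0",
        OF z[unfolded pinched_veronese_def] Q_add Q_saturated]) (simp_all add: M)
  then obtain h where h: "z = to_fract h" "\<forall>a\<in>Poly_Mapping.keys h. ?Q a"
    by blast
  then have "h \<in> veronese n d"
    unfolding veronese_def monomial_ring_def mem_Collect_eq subset_iff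
      semigroup_gen_T_exps_iff[OF assms] by blast
  then show "z \<in> embed (veronese n d)"
    using h(1) by (simp add: embed_def to_fract_def)
qed

lemma embed_veronese_subset_normalization:
  assumes "n \<ge> 2" and "d \<ge> 2" and m: "m \<in> T_exps n d" and "max_exp n m < d"
    and "\<not> (n = 2 \<and> d = 2 \<and> m = Poly_Mapping.single 0 1 + Poly_Mapping.single 1 1)"
  shows "embed (veronese n d :: 'k::field mpoly set) \<subseteq> normalization (pinched_veronese n d m)"
proof
  let ?P = "semigroup_gen (T_exps n d - {m})"
  obtain i j where "i < n" "j < n" "i \<noteq> j" "Poly_Mapping.lookup m i > 0" "Poly_Mapping.lookup m j > 0"
    using max_exp_less_imp_two_coordinates[OF m \<open>max_exp n m < d\<close>] \<open>d \<ge> 2\<close> by auto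
  then have mm: "m + m \<in> ?P"
    by (rule double_in_pinched[OF m])
  obtain k where "Poly_Mapping.single k d \<in> ?P" "m + Poly_Mapping.single k d \<in> ?P"
    using exists_single_and_shift_in_pinched[OF m assms(4,1,2,5)] by blast
  fix z :: "'k mpoly fract"
  assume "z \<in> embed (veronese n d)"
  then obtain v where v: "v \<in> veronese n d" "z = Fraction_Field.Fract v 1"
    by (auto simp: embed_def)
  have "semigroup_gen (T_exps n d) \<subseteq> ?P \<union> (\<lambda>b. m + b) ` ?P"
    using semigroup_gen_split_pinched[OF _ mm] by blast
  with v(1) have "v \<in> monomial_ring (?P \<union> (\<lambda>b. m + b) ` ?P)"
    unfolding veronese_def monomial_ring_def by blast
  then obtain p q where "p \<in> monomial_ring ?P" "q \<in> monomial_ring ?P" "v = p + Poly_Mapping.single m 1 * q"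
    by (meson monomial_ring_decompose_shift)
  then show "z \<in> normalization (pinched_veronese n d m)"
    unfolding v(2) pinched_veronese_def
    using shifted_sum_in_normalization mm \<open>Poly_Mapping.single k d \<in> ?P\<close> \<open>m + Poly_Mapping.single k d \<in> ?P\<close>
    by blast
qed

theorem theorem2p3:
  fixes n d :: nat and m :: "nat \<Rightarrow>\<^sub>0 nat"
  assumes "n \<ge> 2" and "d \<ge> 2" and "m \<in> T_exps n d"
  shows "(n = 2 \<and> d = 2 \<and> m = Poly_Mapping.single 0 1 + Poly_Mapping.single 1 1 \<longrightarrow>
            is_normal (pinched_veronese n d m :: ((nat \<Rightarrow>\<^sub>0 nat) \<Rightarrow>\<^sub>0 'k::field) set))
       \<and> (\<not> (n = 2 \<and> d = 2 \<and> m = Poly_Mapping.single 0 1 + Poly_Mapping.single 1 1) \<longrightarrow>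
            (max_exp n m < d \<longrightarrow>
               normalization (pinched_veronese n d m :: ((nat \<Rightarrow>\<^sub>0 nat) \<Rightarrow>\<^sub>0 'k) set)
                 = embed (veronese n d :: ((nat \<Rightarrow>\<^sub>0 nat) \<Rightarrow>\<^sub>0 'k) set))
          \<and> (max_exp n m = d \<longrightarrow>
               is_normal (pinched_veronese n d m :: ((nat \<Rightarrow>\<^sub>0 nat) \<Rightarrow>\<^sub>0 'k) set)))"
proof (intro conjI impI)
  show "is_normal (pinched_veronese n d m :: 'k mpoly set)"
    if "n = 2 \<and> d = 2 \<and> m = Poly_Mapping.single 0 1 + Poly_Mapping.single 1 1"
    using that is_normal_pinched_veronese_2_2 by blast
  show "normalization (pinched_veronese n d m :: 'k mpoly set) = embed (veronese n d)"
    if "\<not> (n = 2 \<and> d = 2 \<and> m = Poly_Mapping.single 0 1 + Poly_Mapping.single 1 1)" and "max_exp n m < d"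
    using normalization_pinched_veronese_subset embed_veronese_subset_normalization assms that
    by (intro equalityI) blast+
  show "is_normal (pinched_veronese n d m :: 'k mpoly set)" if max: "max_exp n m = d"
  proof -
    obtain i where "i < n" "m = Poly_Mapping.single i d"
      using max_exp_eq_imp_single[OF assms(3) max] \<open>n \<ge> 2\<close> by auto
    then show ?thesis
      using is_normal_pinched_veronese_single[of i n d] \<open>d \<ge> 2\<close> by simp
  qed
qed

end
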